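(* The assignments $\mathcal{A}\mapsto\big(\mathbf{GNS}_{\mathcal{A}}:\mathbf{States}(\mathcal{A})\to\mathbf{Rep}(\mathcal{A})\big)$ for each $C^*$-algebra $\mathcal{A}$ and $(f:\mathcal{A}'\to\mathcal{A})\mapsto\big(\mathbf{GNS}_f:\mathbf{GNS}_{\mathcal{A}'}\circ\mathbf{States}(f)\Rightarrow\mathbf{Rep}(f)\circ\mathbf{GNS}_{\mathcal{A}}\big)$ for each morphism of $C^*$-algebras define an oplax-natural transformation $\mathbf{GNS}:\mathbf{States}\Rightarrow\mathbf{Rep}$ between functors $\mathbf{C^*\text{-}Alg}^{\mathrm{op}}\to\mathbf{Cat}$.
   Context: All $C^*$-algebras are unital, and a morphism $f:\mathcal{A}'\to\mathcal{A}$ is a bounded linear map with $f(a^* )=f(a)^*$, $f(ab)=f(a)f(b)$, $f(1)=1$; $\mathbf{C^*\text{-}Alg}$ is this category, viewed as a strict 2-category with only identity 2-morphisms; $\mathbf{Cat}$ is the strict 2-category of categories, functors and natural transformations. A state on $\mathcal{A}$ is a bounded linear $\omega:\mathcal{A}\to\mathbb{C}$ with $\omega(1)=1$ and $\omega(a^*a)\ge0$. $\mathbf{States}(\mathcal{A})$ is the discrete category of states on $\mathcal{A}$; $\mathbf{States}(f)(\omega)=\omega\circ f$. $\mathbf{Rep}(\mathcal{A})$ has objects $(\pi,\mathcal{H})$ with $\mathcal{H}$ a Hilbert space and $\pi:\mathcal{A}\to\mathcal{B}(\mathcal{H})$ a unital $*$-homomorphism, and morphisms intertwiners (bounded linear $L$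 with $L\pi(a)=\pi'(a)L$ for all $a$); $\mathbf{Rep}(f)$ sends $(\pi,\mathcal{H})$ to $(\pi\circ f,\mathcal{H})$ and $L$ to $L$. For a state $\omega$ on $\mathcal{A}$: $\mathcal{N}_\omega=\{x:\omega(x^*x)=0\}$, $\mathcal{H}_\omega$ is the completion of $\mathcal{A}/\mathcal{N}_\omega$ under $\langle[b],[a]\rangle_\omega=\omega(b^*a)$, $\pi_\omega(a)$ is the bounded extension of $[b]\mapsto[ab]$, and $\mathbf{GNS}_{\mathcal{A}}(\omega)=(\pi_\omega,\mathcal{H}_\omega)$. For $f:\mathcal{A}'\to\mathcal{A}$ and a state $\omega$ on $\mathcal{A}$, $\mathbf{GNS}_f(\omega)=L_f:\mathcal{H}_{\omega\circ f}\to\mathcal{H}_\omega$ is the bounded extension of $[a']\mapsto[f(a')]$, an intertwiner $(\pi_{\omega\circ f},\mathcal{H}_{\omega\circ f})\to(\pi_\omega\circ f,\mathcal{H}_\omega)$ of representations of $\mathcal{A}'$. For strict 2-functors $F,G:\mathcal{C}\to\mathcal{D}$, an oplax-natural transformation $\rho:F\Rightarrow G$ assigns to each object $x$ a 1-morphism $\rho(x):F(x)\to G(x)$ and to each 1-morphism $\alpha:x\to y$ a (not necessarily invertible) 2-morphism $\rho(\alpha):\rho(y)\circ F(\alpha)\Rightarrow G(\alpha)\circ\rho(x)$, such that $\rho(\mathrm{id}_x)=\mathrm{id}_{\rho(x)}$, $\rho(\beta\alpha)=(\mathrm{id}_{G(\beta)}\circ\rho(\alpha))\cdot(\rho(\beta)\circ\mathrm{id}_{F(\alpha)})$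 for composable $\alpha,\beta$, and the naturality condition with respect to 2-morphisms of $\mathcal{C}$ holds. *)

theory Defs
  imports Complex_Main
begin

class cstar_algebra = real_normed_algebra_1 + banach +
  fixes scaleC :: "complex \<Rightarrow> 'a \<Rightarrow> 'a"
    and cstar :: "'a \<Rightarrow> 'a"
  assumes scaleC_of_real: "scaleC (complex_of_real r) x = scaleR r x"
    and scaleC_add_right: "scaleC c (x + y) = scaleC c x + scaleC c y"
    and scaleC_add_left: "scaleC (c + d) x = scaleC c x + scaleC d x"
    and scaleC_scaleC: "scaleC c (scaleC d x) = scaleC (c * d) x"
    and scaleC_one: "scaleC 1 x = x"
    and norm_scaleC: "norm (scaleC c x) = cmod c * norm x"
    and mult_scaleC_left: "scaleC c x * y = scaleC c (x * y)"
    and mult_scaleC_right: "x * scaleC c y = scaleC c (x * y)"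
    and cstar_cstar: "cstar (cstar x) = x"
    and cstar_add: "cstar (x + y) = cstar x + cstar y"
    and cstar_scaleC: "cstar (scaleC c x) = scaleC (cnj c) (cstar x)"
    and cstar_mult: "cstar (x * y) = cstar y * cstar x"
    and cstar_identity: "norm (cstar x * x) = (norm x)^2"

definition cstar_hom :: "('b::cstar_algebra \<Rightarrow> 'a::cstar_algebra) \<Rightarrow> bool" where
  "cstar_hom f \<longleftrightarrow>
     (\<forall>x y. f (x + y) = f x + f y) \<and>
     (\<forall>c x. f (scaleC c x) = scaleC c (f x)) \<and>
     (\<exists>K. \<forall>x. norm (f x) \<le> K * norm x) \<and>
     (\<forall>x. f (cstar x) = cstar (f x)) \<and>
     (\<forall>x y. f (x * y) = f x * f y) \<and>
     f 1 = 1"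

text \<open>States: bounded linear, normalised, positive functionals
  (\<open>\<omega>(a*a) \<ge> 0\<close> in \<open>\<complex>\<close> means: real and nonnegative).\<close>

definition is_state :: "('a::cstar_algebra \<Rightarrow> complex) \<Rightarrow> bool" where
  "is_state \<omega> \<longleftrightarrow>
     (\<forall>x y. \<omega> (x + y) = \<omega> x + \<omega> y) \<and>
     (\<forall>c x. \<omega> (scaleC c x) = c * \<omega> x) \<and>
     (\<exists>K. \<forall>x. cmod (\<omega> x) \<le> K * norm x) \<and>
     \<omega> 1 = 1 \<and>
     (\<forall>a. Im (\<omega> (cstar a * a)) = 0 \<and> 0 \<le> Re (\<omega> (cstar a * a)))"

record 'h hilb =
  hcarrier :: "'h set"
  hadd :: "'h \<Rightarrow> 'h \<Rightarrow> 'h"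
  hzero :: "'h"
  hscale :: "complex \<Rightarrow> 'h \<Rightarrow> 'h"
  hinner :: "'h \<Rightarrow> 'h \<Rightarrow> complex"

definition hnorm :: "'h hilb \<Rightarrow> 'h \<Rightarrow> real" where
  "hnorm H x = sqrt (Re (hinner H x x))"

definition hdist :: "'h hilb \<Rightarrow> 'h \<Rightarrow> 'h \<Rightarrow> real" where
  "hdist H x y = hnorm H (hadd H x (hscale H (-1) y))"

text \<open>Inner product linear in the second, conjugate-linear in the first argument
  (as in \<open>\<langle>[b],[a]\<rangle> = \<omega>(b*a)\<close>).\<close>

definition hilbert_space :: "'h hilb \<Rightarrow> bool" where
  "hilbert_space H \<longleftrightarrow>
     (let V = hcarrier H in
      hzero H \<in> V \<and>
      (\<forall>x\<in>V. \<forall>y\<in>V. hadd H x y \<in> V) \<and>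
      (\<forall>c. \<forall>x\<in>V. hscale H c x \<in> V) \<and>
      (\<forall>x\<in>V. \<forall>y\<in>V. \<forall>z\<in>V. hadd H (hadd H x y) z = hadd H x (hadd H y z)) \<and>
      (\<forall>x\<in>V. \<forall>y\<in>V. hadd H x y = hadd H y x) \<and>
      (\<forall>x\<in>V. hadd H x (hzero H) = x) \<and>
      (\<forall>x\<in>V. hadd H x (hscale H (-1) x) = hzero H) \<and>
      (\<forall>x\<in>V. hscale H 1 x = x) \<and>
      (\<forall>a b. \<forall>x\<in>V. hscale H a (hscale H b x) = hscale H (a * b) x) \<and>
      (\<forall>a b. \<forall>x\<in>V. hscale H (a + b) x = hadd H (hscale H a x) (hscale H b x)) \<and>
      (\<forall>a. \<forall>x\<in>V. \<forall>y\<in>V. hscale H a (hadd H x y) = hadd H (hscale H a x) (hscale H a y)) \<and>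
      (\<forall>x\<in>V. \<forall>y\<in>V. \<forall>z\<in>V. hinner H x (hadd H y z) = hinner H x y + hinner H x z) \<and>
      (\<forall>c. \<forall>x\<in>V. \<forall>y\<in>V. hinner H x (hscale H c y) = c * hinner H x y) \<and>
      (\<forall>x\<in>V. \<forall>y\<in>V. hinner H y x = cnj (hinner H x y)) \<and>
      (\<forall>x\<in>V. 0 \<le> Re (hinner H x x)) \<and>
      (\<forall>x\<in>V. hinner H x x = 0 \<longrightarrow> x = hzero H) \<and>
      (\<forall>X. (\<forall>n. X n \<in> V) \<and>
           (\<forall>e>0. \<exists>N. \<forall>m\<ge>N. \<forall>n\<ge>N. hdist H (X m) (X n) < e) \<longrightarrow>
           (\<exists>x\<in>V. (\<lambda>n. hdist H (X n) x) \<longlonglongrightarrow> 0)))"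

text \<open>Bounded linear maps \<open>H \<rightarrow> H'\<close> (only their values on the carrier matter).\<close>

definition bounded_linear_op :: "'h hilb \<Rightarrow> 'k hilb \<Rightarrow> ('h \<Rightarrow> 'k) \<Rightarrow> bool" where
  "bounded_linear_op H H' L \<longleftrightarrow>
     (\<forall>x\<in>hcarrier H. L x \<in> hcarrier H') \<and>
     (\<forall>x\<in>hcarrier H. \<forall>y\<in>hcarrier H. L (hadd H x y) = hadd H' (L x) (L y)) \<and>
     (\<forall>c. \<forall>x\<in>hcarrier H. L (hscale H c x) = hscale H' c (L x)) \<and>
     (\<exists>K. \<forall>x\<in>hcarrier H. hnorm H' (L x) \<le> K * hnorm H x)"

definition rep_obj :: "(('a::cstar_algebra) \<Rightarrow> 'h \<Rightarrow> 'h) \<times> 'h hilb \<Rightarrow> bool" where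
  "rep_obj R \<longleftrightarrow> (case R of (\<pi>, H) \<Rightarrow>
     hilbert_space H \<and>
     (\<forall>a. bounded_linear_op H H (\<pi> a)) \<and>
     (\<forall>x\<in>hcarrier H. \<pi> 1 x = x) \<and>
     (\<forall>a b. \<forall>x\<in>hcarrier H. \<pi> (a + b) x = hadd H (\<pi> a x) (\<pi> b x)) \<and>
     (\<forall>c a. \<forall>x\<in>hcarrier H. \<pi> (scaleC c a) x = hscale H c (\<pi> a x)) \<and>
     (\<forall>a b. \<forall>x\<in>hcarrier H. \<pi> (a * b) x = \<pi> a (\<pi> b x)) \<and>
     (\<forall>a. \<forall>x\<in>hcarrier H. \<forall>y\<in>hcarrier H.
         hinner H (\<pi> (cstar a) x) y = hinner H x (\<pi> a y)))"

definition intertwiner ::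
  "(('a::cstar_algebra) \<Rightarrow> 'h \<Rightarrow> 'h) \<times> 'h hilb \<Rightarrow> ('a \<Rightarrow> 'k \<Rightarrow> 'k) \<times> 'k hilb
     \<Rightarrow> ('h \<Rightarrow> 'k) \<Rightarrow> bool" where
  "intertwiner R R' L \<longleftrightarrow> (case R of (\<pi>, H) \<Rightarrow> case R' of (\<pi>', H') \<Rightarrow>
     bounded_linear_op H H' L \<and>
     (\<forall>a. \<forall>x\<in>hcarrier H. L (\<pi> a x) = \<pi>' a (L x)))"

text \<open>\<open>Rep(f)\<close> on objects: \<open>(\<pi>, H) \<mapsto> (\<pi> \<circ> f, H)\<close> (on morphisms it is the identity).\<close>

definition Rep_map :: "('b \<Rightarrow> 'a) \<Rightarrow> ('a \<Rightarrow> 'h \<Rightarrow> 'h) \<times> 'h hilb \<Rightarrow> ('b \<Rightarrow> 'h \<Rightarrow> 'h) \<times> 'h hilb" where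
  "Rep_map f R = (case R of (\<pi>, H) \<Rightarrow> (\<lambda>a'. \<pi> (f a'), H))"

text \<open>\<open>\<H>\<^sub>\<omega>\<close> is realised as the completion of \<open>A/N\<^sub>\<omega>\<close>: equivalence classes of sequences in \<open>A\<close>
  that are Cauchy for the seminorm \<open>a \<mapsto> \<omega>(a*a)\<^sup>1\<^sup>/\<^sup>2\<close>; the class of a constant sequence
  \<open>a\<close> is \<open>[a]\<close>.\<close>

definition gns_sn :: "('a::cstar_algebra \<Rightarrow> complex) \<Rightarrow> 'a \<Rightarrow> real" where
  "gns_sn \<omega> a = sqrt (Re (\<omega> (cstar a * a)))"

definition gns_cauchy :: "('a::cstar_algebra \<Rightarrow> complex) \<Rightarrow> (nat \<Rightarrow> 'a) \<Rightarrow> bool" where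
  "gns_cauchy \<omega> X \<longleftrightarrow> (\<forall>e>0. \<exists>N. \<forall>m\<ge>N. \<forall>n\<ge>N. gns_sn \<omega> (X m - X n) < e)"

definition gns_equiv :: "('a::cstar_algebra \<Rightarrow> complex) \<Rightarrow> (nat \<Rightarrow> 'a) \<Rightarrow> (nat \<Rightarrow> 'a) \<Rightarrow> bool" where
  "gns_equiv \<omega> X Y \<longleftrightarrow> (\<lambda>n. gns_sn \<omega> (X n - Y n)) \<longlonglongrightarrow> 0"

definition gns_cls :: "('a::cstar_algebra \<Rightarrow> complex) \<Rightarrow> (nat \<Rightarrow> 'a) \<Rightarrow> (nat \<Rightarrow> 'a) set" where
  "gns_cls \<omega> X = {Y. gns_cauchy \<omega> Y \<and> gns_equiv \<omega> X Y}"

definition gns_repr :: "(nat \<Rightarrow> 'a) set \<Rightarrow> nat \<Rightarrow> 'a" where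
  "gns_repr u = (SOME X. X \<in> u)"

definition GNS_space :: "('a::cstar_algebra \<Rightarrow> complex) \<Rightarrow> (nat \<Rightarrow> 'a) set hilb" where
  "GNS_space \<omega> =
     \<lparr> hcarrier = {gns_cls \<omega> X | X. gns_cauchy \<omega> X},
       hadd = (\<lambda>u v. gns_cls \<omega> (\<lambda>n. gns_repr u n + gns_repr v n)),
       hzero = gns_cls \<omega> (\<lambda>n. 0),
       hscale = (\<lambda>c u. gns_cls \<omega> (\<lambda>n. scaleC c (gns_repr u n))),
       hinner = (\<lambda>u v. lim (\<lambda>n. \<omega> (cstar (gns_repr u n) * gns_repr v n))) \<rparr>"

text \<open>\<open>\<pi>\<^sub>\<omega>(a)\<close>: the bounded extension of \<open>[b] \<mapsto> [ab]\<close>.\<close>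

definition GNS_rep :: "('a::cstar_algebra \<Rightarrow> complex) \<Rightarrow> 'a \<Rightarrow> (nat \<Rightarrow> 'a) set \<Rightarrow> (nat \<Rightarrow> 'a) set" where
  "GNS_rep \<omega> a u = gns_cls \<omega> (\<lambda>n. a * gns_repr u n)"

definition GNS :: "('a::cstar_algebra \<Rightarrow> complex)
    \<Rightarrow> ('a \<Rightarrow> (nat \<Rightarrow> 'a) set \<Rightarrow> (nat \<Rightarrow> 'a) set) \<times> (nat \<Rightarrow> 'a) set hilb" where
  "GNS \<omega> = (GNS_rep \<omega>, GNS_space \<omega>)"

text \<open>\<open>GNS\<^sub>f(\<omega>) = L\<^sub>f : \<H>\<^sub>\<omega>\<^sub>\<circ>\<^sub>f \<rightarrow> \<H>\<^sub>\<omega>\<close>: the bounded extension of \<open>[a'] \<mapsto> [f(a')]\<close>.\<close>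

definition GNS_mor :: "('b::cstar_algebra \<Rightarrow> 'a::cstar_algebra) \<Rightarrow> ('a \<Rightarrow> complex)
    \<Rightarrow> (nat \<Rightarrow> 'b) set \<Rightarrow> (nat \<Rightarrow> 'a) set" where
  "GNS_mor f \<omega> u = gns_cls \<omega> (\<lambda>n. f (gns_repr u n))"

end

theory Submission
  imports Defs
begin

text \<open>A state \<open>\<omega>\<close> makes \<open>\<langle>x, y\<rangle> = \<omega>(x\<^sup>* y)\<close> a positive semidefinite Hermitian form on \<open>A\<close>,
  so Cauchy--Schwarz holds and \<open>\<omega>(x\<^sup>* x)\<^sup>1\<^sup>/\<^sup>2\<close> is a seminorm. Classes of sequences that are
  Cauchy for this seminorm form a Hilbert space \<open>H\<^sub>\<omega>\<close>, and left multiplication by \<open>a\<close> acts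
  on it boundedly because \<open>\<omega>((ab)\<^sup>*(ab)) \<le> \<parallel>a\<^sup>*\<parallel> \<parallel>a\<parallel> \<omega>(b\<^sup>* b)\<close>; the latter follows from
  iterating Cauchy--Schwarz along the powers \<open>h\<^sup>2\<^sup>\<^sup>n\<close> of \<open>h = a\<^sup>* a\<close>, which needs no spectral
  theory. For a morphism \<open>f\<close>, the seminorm of \<open>\<omega> \<circ> f\<close> is that of \<open>\<omega>\<close> composed with \<open>f\<close>, so
  \<open>[X] \<mapsto> [f \<circ> X]\<close> is a well-defined isometric intertwiner, and the unit and composition
  laws hold already at the level of representing sequences.\<close>

lemma scaleC_minus_one [simp]: "scaleC (-1) (x::'a::cstar_algebra) = - x"
  using scaleC_of_real[of "-1" x] by simp

lemma scaleC_minus_right [simp]: "scaleC c (- x::'a::cstar_algebra) = - scaleC c x"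
  by (metis mult.commute scaleC_minus_one scaleC_scaleC)

lemma scaleC_diff_right: "scaleC c (x - y::'a::cstar_algebra) = scaleC c x - scaleC c y"
  using scaleC_add_right[of c x "- y"] by simp

lemma cstar_zero [simp]: "cstar (0::'a::cstar_algebra) = 0"
  using cstar_add[of "0::'a" 0] by simp

lemma cstar_minus [simp]: "cstar (- x::'a::cstar_algebra) = - cstar x"
  using cstar_add[of x "- x"] by (simp add: eq_neg_iff_add_eq_0 add.commute)

lemma cstar_diff: "cstar (x - y::'a::cstar_algebra) = cstar x - cstar y"
  using cstar_add[of x "- y"] by simp

lemma cstar_one [simp]: "cstar (1::'a::cstar_algebra) = 1"
  by (metis cstar_cstar cstar_mult mult_1_left mult_1_right)

lemma cstar_power_selfadjoint:
  fixes h :: "'a::cstar_algebra"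
  assumes "cstar h = h"
  shows "cstar (h ^ k) = h ^ k"
proof (induction k)
  case (Suc k)
  then show ?case
    using assms by (simp add: cstar_mult power_commutes)
qed simp

lemma cstar_hom_add: "cstar_hom f \<Longrightarrow> f (x + y) = f x + f y"
  and cstar_hom_scaleC: "cstar_hom f \<Longrightarrow> f (scaleC c x) = scaleC c (f x)"
  and cstar_hom_cstar: "cstar_hom f \<Longrightarrow> f (cstar x) = cstar (f x)"
  and cstar_hom_mult: "cstar_hom f \<Longrightarrow> f (x * y) = f x * f y"
  and cstar_hom_one: "cstar_hom f \<Longrightarrow> f 1 = 1"
  by (simp_all add: cstar_hom_def)

lemma cstar_hom_diff: "cstar_hom f \<Longrightarrow> f (x - y) = f x - f y"
  using cstar_hom_add[of f x "- y"] cstar_hom_scaleC[of f "-1" y] by simp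

lemma cstar_hom_bounded:
  assumes "cstar_hom f"
  shows "\<exists>K\<ge>0. \<forall>x. norm (f x) \<le> K * norm x"
proof -
  obtain K where K: "\<forall>x. norm (f x) \<le> K * norm x"
    using assms by (auto simp: cstar_hom_def)
  then have "1 \<le> K"
    using K[rule_format, of 1] cstar_hom_one[OF assms] by simp
  with K show ?thesis
    by (intro exI[of _ K]) auto
qed

lemma cstar_hom_comp:
  assumes f: "cstar_hom f" and g: "cstar_hom g"
  shows "cstar_hom (f \<circ> g)"
proof -
  obtain Kf where Kf: "Kf \<ge> 0" "\<forall>x. norm (f x) \<le> Kf * norm x"
    using cstar_hom_bounded[OF f] by blast
  obtain Kg where Kg: "\<forall>x. norm (g x) \<le> Kg * norm x"
    using cstar_hom_bounded[OF g] by blast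
  have "norm (f (g x)) \<le> (Kf * Kg) * norm x" for x
    using Kf(2)[rule_format, of "g x"] mult_left_mono[OF Kg[rule_format, of x] Kf(1)]
    by (simp add: mult.assoc)
  then show ?thesis
    using f g unfolding cstar_hom_def by auto
qed

lemma cmod_sq_le_of_quadratic_nonneg:
  fixes A C :: real and B :: complex
  assumes nonneg: "\<And>c. 0 \<le> A - 2 * Re (c * B) + (cmod c)\<^sup>2 * C" and "0 \<le> C"
  shows "(cmod B)\<^sup>2 \<le> A * C"
proof (cases "C = 0")
  case True
  show ?thesis
  proof (rule ccontr)
    assume "\<not> ?thesis"
    then have B: "(cmod B)\<^sup>2 > 0"
      using True by auto
    define t where "t = (\<bar>A\<bar> + 1) / (2 * (cmod B)\<^sup>2)"
    have "Re ((of_real t * cnj B) * B) = t * (cmod B)\<^sup>2"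
      by (metis Re_complex_of_real complex_norm_square mult.assoc mult.commute of_real_mult)
    then have "0 \<le> A - 2 * t * (cmod B)\<^sup>2"
      using nonneg[of "of_real t * cnj B"] True by simp
    moreover have "2 * t * (cmod B)\<^sup>2 = \<bar>A\<bar> + 1"
      unfolding t_def using B by (simp add: field_simps)
    ultimately show False by linarith
  qed
next
  case False
  then have C: "C > 0"
    using \<open>0 \<le> C\<close> by simp
  define c where "c = cnj B / of_real C"
  have "c * B = of_real ((cmod B)\<^sup>2 / C)"
    unfolding c_def using complex_norm_square[of B] by (simp add: mult.commute)
  moreover have "cmod c = cmod B / C"
    unfolding c_def using C by (simp add: norm_divide)
  ultimately have "0 \<le> A - 2 * ((cmod B)\<^sup>2 / C) + (cmod B / C)\<^sup>2 * C"
    using nonneg[of c] by simp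
  also have "\<dots> = A - (cmod B)\<^sup>2 / C"
    using C by (simp add: field_simps power2_eq_square)
  finally show ?thesis
    using C by (simp add: field_simps)
qed

text \<open>If \<open>c\<^sub>n\<^sup>2 \<le> s c\<^sub>n\<^sub>+\<^sub>1\<close>, then \<open>c\<^sub>n\<close> grows at least like \<open>s (c\<^sub>0/s)\<^sup>2\<^sup>\<^sup>n\<close>;
  an upper bound \<open>C\<^sub>0 M\<^sup>2\<^sup>\<^sup>n\<close> therefore forces \<open>c\<^sub>0 \<le> s M\<close>.\<close>

lemma doubling_recurrence_bound:
  fixes c :: "nat \<Rightarrow> real"
  assumes "0 \<le> s" "0 \<le> M"
    and rec: "\<And>n. (c n)\<^sup>2 \<le> s * c (Suc n)"
    and upper: "\<And>n. c n \<le> C\<^sub>0 * M ^ (2 ^ n)"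
  shows "c 0 \<le> s * M"
proof (rule ccontr)
  assume "\<not> ?thesis"
  then have gt: "c 0 > s * M" by simp
  have s: "s > 0"
  proof (rule ccontr)
    assume "\<not> s > 0"
    then have "(c 0)\<^sup>2 \<le> 0"
      using rec[of 0] \<open>0 \<le> s\<close> by simp
    then show False
      using gt \<open>\<not> s > 0\<close> \<open>0 \<le> s\<close> by simp
  qed
  have M: "M > 0"
    using upper[of 0] gt \<open>0 \<le> M\<close> by (cases "M = 0") auto
  define r where "r = c 0 / (s * M)"
  have r: "r > 1"
    unfolding r_def using gt s M by (simp add: field_simps)
  have lower: "s * M ^ (2 ^ n) * r ^ (2 ^ n) \<le> c n" for n
  proof (induction n)
    case 0
    show ?case
      unfolding r_def using s M by simp
  next
    case (Suc n)
    have "(s * M ^ (2 ^ n) * r ^ (2 ^ n))\<^sup>2 \<le> (c n)\<^sup>2"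
      using Suc s M r by (intro power_mono) auto
    also have "\<dots> \<le> s * c (Suc n)"
      by (rule rec)
    finally have "s * (s * M ^ (2 ^ Suc n) * r ^ (2 ^ Suc n)) \<le> s * c (Suc n)"
      by (simp add: power_mult_distrib mult_2 power_add power2_eq_square mult_ac)
    then show ?case
      using s by simp
  qed
  obtain n where n: "C\<^sub>0 / s < r ^ n"
    using real_arch_pow[OF r] by blast
  have "r ^ n \<le> r ^ (2 ^ n)"
    using r less_exp[of n] by (intro power_increasing) auto
  then have "s * r ^ n \<le> s * r ^ (2 ^ n)"
    using s by simp
  moreover have "C\<^sub>0 < s * r ^ n"
    using n s by (simp add: field_simps)
  ultimately have "C\<^sub>0 < s * r ^ (2 ^ n)"
    by linarith
  then have "C\<^sub>0 * M ^ (2 ^ n) < s * M ^ (2 ^ n) * r ^ (2 ^ n)"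
    using M by simp
  then show False
    using lower[of n] upper[of n] by simp
qed

lemma uniformly_small_dominated:
  fixes d d\<^sub>1 d\<^sub>2 :: "nat \<Rightarrow> nat \<Rightarrow> real"
  assumes A: "0 \<le> A" and B: "0 \<le> B"
    and le: "\<And>m n. d m n \<le> A * d\<^sub>1 m n + B * d\<^sub>2 m n"
    and small\<^sub>1: "\<forall>e>0. \<exists>N. \<forall>m\<ge>N. \<forall>n\<ge>N. d\<^sub>1 m n < e"
    and small\<^sub>2: "\<forall>e>0. \<exists>N. \<forall>m\<ge>N. \<forall>n\<ge>N. d\<^sub>2 m n < e"
  shows "\<forall>e>0. \<exists>N. \<forall>m\<ge>N. \<forall>n\<ge>N. d m n < e"
proof (intro allI impI)
  fix e :: real
  assume "e > 0"
  define e' where "e' = e / (A + B + 1)"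
  have "e' > 0" and e': "(A + B) * e' < e"
    unfolding e'_def using \<open>e > 0\<close> A B by (auto simp: field_simps)
  obtain N\<^sub>1 where N\<^sub>1: "\<forall>m\<ge>N\<^sub>1. \<forall>n\<ge>N\<^sub>1. d\<^sub>1 m n < e'"
    using small\<^sub>1 \<open>e' > 0\<close> by blast
  obtain N\<^sub>2 where N\<^sub>2: "\<forall>m\<ge>N\<^sub>2. \<forall>n\<ge>N\<^sub>2. d\<^sub>2 m n < e'"
    using small\<^sub>2 \<open>e' > 0\<close> by blast
  have "d m n < e" if "m \<ge> max N\<^sub>1 N\<^sub>2" "n \<ge> max N\<^sub>1 N\<^sub>2" for m n
  proof -
    have "d\<^sub>1 m n < e'" "d\<^sub>2 m n < e'"
      using N\<^sub>1 N\<^sub>2 that by auto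
    then have "A * d\<^sub>1 m n \<le> A * e'" "B * d\<^sub>2 m n \<le> B * e'"
      using A B by (simp_all add: mult_left_mono)
    then show ?thesis
      using le[of m n] e' by (simp add: distrib_right)
  qed
  then show "\<exists>N. \<forall>m\<ge>N. \<forall>n\<ge>N. d m n < e"
    by blast
qed

lemma tendsto_zero_dominated:
  fixes u v w :: "nat \<Rightarrow> real"
  assumes "\<And>n. 0 \<le> u n" "\<And>n. u n \<le> A * v n + B * w n" "v \<longlonglongrightarrow> 0" "w \<longlonglongrightarrow> 0"
  shows "u \<longlonglongrightarrow> 0"
proof (rule tendsto_sandwich[of "\<lambda>n. 0" u sequentially "\<lambda>n. A * v n + B * w n"])
  show "(\<lambda>n. A * v n + B * w n) \<longlonglongrightarrow> 0"
    using tendsto_add[OF tendsto_mult_left[OF assms(3)] tendsto_mult_left[OF assms(4)]] by simp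
qed (use assms in auto)

section \<open>The Hermitian form of a state\<close>

locale state =
  fixes \<omega> :: "'a::cstar_algebra \<Rightarrow> complex"
  assumes is_state: "is_state \<omega>"
begin

lemma add [simp]: "\<omega> (x + y) = \<omega> x + \<omega> y"
  and scaleC [simp]: "\<omega> (scaleC c x) = c * \<omega> x"
  and one [simp]: "\<omega> 1 = 1"
  and positive: "Im (\<omega> (cstar a * a)) = 0" "0 \<le> Re (\<omega> (cstar a * a))"
  using is_state by (simp_all add: is_state_def)

lemma zero [simp]: "\<omega> 0 = 0"
  using add[of 0 0] by simp

lemma diff [simp]: "\<omega> (x - y) = \<omega> x - \<omega> y"
  using add[of x "- y"] scaleC[of "-1" y] by simp

lemma bounded: "\<exists>K\<ge>0. \<forall>x. cmod (\<omega> x) \<le> K * norm x"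
proof -
  obtain K where K: "\<forall>x. cmod (\<omega> x) \<le> K * norm x"
    using is_state by (auto simp: is_state_def)
  then have "1 \<le> K"
    using K[rule_format, of 1] by simp
  with K show ?thesis
    by (intro exI[of _ K]) auto
qed

definition form :: "'a \<Rightarrow> 'a \<Rightarrow> complex"
  where "form x y = \<omega> (cstar x * y)"

lemma form_add_right [simp]: "form x (y + z) = form x y + form x z"
  and form_add_left [simp]: "form (x + y) z = form x z + form y z"
  and form_diff_right [simp]: "form x (y - z) = form x y - form x z"
  and form_diff_left [simp]: "form (x - y) z = form x z - form y z"
  and form_scaleC_right [simp]: "form x (scaleC c y) = c * form x y"
  and form_scaleC_left [simp]: "form (scaleC c x) y = cnj c * form x y"
  by (simp_all add: form_def cstar_add cstar_diff cstar_scaleC distrib_left distrib_right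
      right_diff_distrib left_diff_distrib mult_scaleC_left mult_scaleC_right)

lemma form_self_real: "Im (form x x) = 0"
  and form_self_nonneg: "0 \<le> Re (form x x)"
  unfolding form_def by (rule positive)+

text \<open>Hermitian symmetry comes from positivity alone, by polarization with \<open>x + y\<close> and
  \<open>x + \<i> y\<close>.\<close>

lemma form_cnj: "form y x = cnj (form x y)"
proof -
  have "Im (form (x + y) (x + y)) = 0" "Im (form (x + scaleC \<i> y) (x + scaleC \<i> y)) = 0"
    by (rule form_self_real)+
  then have "Im (form x y) + Im (form y x) = 0" "Re (form x y) - Re (form y x) = 0"
    using form_self_real[of x] form_self_real[of y] by simp_all
  then show ?thesis
    by (simp add: complex_eq_iff)
qed

lemma form_Cauchy_Schwarz: "(cmod (form x y))\<^sup>2 \<le> Re (form x x) * Re (form y y)"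
proof (rule cmod_sq_le_of_quadratic_nonneg)
  fix c
  have expand: "form (x - scaleC c y) (x - scaleC c y)
      = form x x - cnj c * cnj (form x y) - c * form x y + cnj c * c * form y y"
    by (simp add: form_cnj[of y x] algebra_simps)
  have "cnj c * c = complex_of_real ((cmod c)\<^sup>2)"
    using complex_norm_square[of c] by (simp add: mult.commute)
  then have "Re (cnj c * c * form y y) = (cmod c)\<^sup>2 * Re (form y y)"
    using form_self_real[of y] by simp
  moreover have "Re (cnj c * cnj (form x y)) = Re (c * form x y)"
    by (metis complex_cnj_mult cnj.simps(1))
  ultimately have "Re (form (x - scaleC c y) (x - scaleC c y))
      = Re (form x x) - 2 * Re (c * form x y) + (cmod c)\<^sup>2 * Re (form y y)"
    unfolding expand by simp
  then show "0 \<le> Re (form x x) - 2 * Re (c * form x y) + (cmod c)\<^sup>2 * Re (form y y)"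
    using form_self_nonneg by metis
qed (rule form_self_nonneg)

abbreviation sn :: "'a \<Rightarrow> real"
  where "sn \<equiv> gns_sn \<omega>"

lemma sn_def: "sn x = sqrt (Re (form x x))"
  by (simp add: gns_sn_def form_def)

lemma sn_nonneg [simp]: "0 \<le> sn x"
  by (simp add: sn_def form_self_nonneg)

lemma sn_zero [simp]: "sn 0 = 0"
  by (simp add: sn_def form_def)

lemma sn_square: "(sn x)\<^sup>2 = Re (form x x)"
  by (simp add: sn_def form_self_nonneg)

lemma cmod_form_le: "cmod (form x y) \<le> sn x * sn y"
proof -
  have "(cmod (form x y))\<^sup>2 \<le> (sn x * sn y)\<^sup>2"
    using form_Cauchy_Schwarz[of x y] by (simp add: power_mult_distrib sn_square)
  then show ?thesis
    by (rule power2_le_imp_le) simp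
qed

lemma sn_triangle: "sn (x + y) \<le> sn x + sn y"
proof -
  have "Re (form (x + y) (x + y)) = Re (form x x) + Re (form y y) + 2 * Re (form x y)"
    using form_cnj[of y x] by simp
  also have "\<dots> \<le> (sn x)\<^sup>2 + (sn y)\<^sup>2 + 2 * (sn x * sn y)"
    using cmod_form_le[of x y] complex_Re_le_cmod[of "form x y"] by (simp add: sn_square)
  also have "\<dots> = (sn x + sn y)\<^sup>2"
    by (simp add: power2_eq_square algebra_simps)
  finally show ?thesis
    unfolding sn_def[of "x + y"] by (intro real_le_lsqrt) (simp_all add: form_self_nonneg)
qed

lemma sn_scaleC: "sn (scaleC c x) = cmod c * sn x"
proof -
  have "cnj c * c = complex_of_real ((cmod c)\<^sup>2)"
    using complex_norm_square[of c] by (simp add: mult.commute)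
  moreover have "form (scaleC c x) (scaleC c x) = (cnj c * c) * form x x"
    by (simp add: mult.assoc)
  ultimately have "Re (form (scaleC c x) (scaleC c x)) = (cmod c)\<^sup>2 * Re (form x x)"
    by (simp only: scaleR_conv_of_real[symmetric] scaleR_complex.sel(1))
  then show ?thesis
    by (simp add: sn_def real_sqrt_mult)
qed

lemma sn_minus_commute: "sn (x - y) = sn (y - x)"
  using sn_scaleC[of "-1" "x - y"] by simp

lemma sn_diff_triangle: "sn (x - z) \<le> sn (x - y) + sn (y - z)"
  using sn_triangle[of "x - y" "y - z"] by simp

lemma sn_add_diff_le: "sn ((a + b) - (c + d)) \<le> sn (a - c) + sn (b - d)"
  using sn_triangle[of "a - c" "b - d"] by (simp add: algebra_simps)

lemma cmod_form_diff_le: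
  assumes "sn x' \<le> B\<^sub>x" "sn y \<le> B\<^sub>y"
  shows "cmod (form x y - form x' y') \<le> B\<^sub>y * sn (x - x') + B\<^sub>x * sn (y - y')"
proof -
  have "cmod (form x y - form x' y') \<le> cmod (form (x - x') y) + cmod (form x' (y - y'))"
    using norm_triangle_ineq[of "form (x - x') y" "form x' (y - y')"] by simp
  also have "\<dots> \<le> sn (x - x') * sn y + sn x' * sn (y - y')"
    by (intro add_mono cmod_form_le)
  also have "\<dots> \<le> sn (x - x') * B\<^sub>y + B\<^sub>x * sn (y - y')"
    using assms by (intro add_mono mult_left_mono mult_right_mono) auto
  finally show ?thesis
    by (simp add: mult.commute)
qed

text \<open>With \<open>h = a\<^sup>* a\<close> and \<open>c\<^sub>n = |\<langle>b, h\<^sup>2\<^sup>\<^sup>n b\<rangle>|\<close>, Cauchy--Schwarz gives \<open>c\<^sub>n\<^sup>2 \<le> \<langle>b, b\<rangle> c\<^sub>n\<^sub>+\<^sub>1\<close>,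
  while boundedness of \<open>\<omega>\<close> gives \<open>c\<^sub>n \<le> const \<cdot> \<parallel>h\<parallel>\<^sup>2\<^sup>\<^sup>n\<close>.\<close>

lemma form_mult_le: "Re (form (a * b) (a * b)) \<le> norm (cstar a) * norm a * Re (form b b)"
proof -
  define h where "h = cstar a * a"
  have "cstar h = h"
    unfolding h_def by (simp add: cstar_mult cstar_cstar)
  then have form_power: "form (h ^ k * b) (h ^ k * b) = form b (h ^ (2 * k) * b)" for k
    by (simp add: form_def cstar_mult cstar_power_selfadjoint mult.assoc power_add mult_2)
  define c where "c n = cmod (form b (h ^ (2 ^ n) * b))" for n
  define s where "s = Re (form b b)"
  obtain K where K: "K \<ge> 0" "\<forall>x. cmod (\<omega> x) \<le> K * norm x"
    using bounded by blast
  have rec: "(c n)\<^sup>2 \<le> s * c (Suc n)" for n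
  proof -
    have "(c n)\<^sup>2 \<le> s * Re (form (h ^ (2 ^ n) * b) (h ^ (2 ^ n) * b))"
      unfolding c_def s_def by (rule form_Cauchy_Schwarz)
    also have "\<dots> \<le> s * c (Suc n)"
      unfolding c_def s_def form_power
      by (intro mult_left_mono form_self_nonneg) (simp add: mult.commute complex_Re_le_cmod)
    finally show ?thesis .
  qed
  have upper: "c n \<le> (K * norm (cstar b) * norm b) * norm h ^ (2 ^ n)" for n
  proof -
    have "norm (cstar b * (h ^ (2 ^ n) * b)) \<le> norm (cstar b) * (norm (h ^ (2 ^ n)) * norm b)"
      by (meson norm_mult_ineq mult_left_mono norm_ge_zero order_trans)
    also have "\<dots> \<le> norm (cstar b) * (norm h ^ (2 ^ n) * norm b)"
      by (intro mult_left_mono mult_right_mono norm_power_ineq) auto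
    finally have "K * norm (cstar b * (h ^ (2 ^ n) * b))
        \<le> K * (norm (cstar b) * (norm h ^ (2 ^ n) * norm b))"
      using K(1) by (rule mult_left_mono)
    then show ?thesis
      using K(2) unfolding c_def form_def by (smt (verit) mult.commute mult.left_commute)
  qed
  have "c 0 \<le> s * norm h"
    by (rule doubling_recurrence_bound[OF _ _ rec upper]) (simp_all add: s_def form_self_nonneg)
  moreover have "Re (form (a * b) (a * b)) \<le> c 0"
    unfolding c_def h_def using complex_Re_le_cmod
    by (simp add: form_def cstar_mult mult.assoc)
  moreover have "s * norm h \<le> norm (cstar a) * norm a * s"
    using form_self_nonneg[of b] norm_mult_ineq[of "cstar a" a]
    unfolding h_def s_def by (simp add: mult.commute mult_left_mono)
  ultimately show ?thesis
    unfolding s_def by linarith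
qed

lemma sn_mult_le: "sn (a * b) \<le> sqrt (norm (cstar a) * norm a) * sn b"
  using real_sqrt_le_mono[OF form_mult_le[of a b]] by (simp add: sn_def real_sqrt_mult)

end

section \<open>The completion \<open>H\<^sub>\<omega>\<close>\<close>

context state
begin

abbreviation "cauchy \<equiv> gns_cauchy \<omega>"
abbreviation "eqv \<equiv> gns_equiv \<omega>"
abbreviation "cls \<equiv> gns_cls \<omega>"
abbreviation "H \<equiv> GNS_space \<omega>"

lemma cauchy_dominated:
  assumes "0 \<le> A" "0 \<le> B" "\<And>m n. sn (Z m - Z n) \<le> A * sn (X m - X n) + B * sn (Y m - Y n)"
    and "cauchy X" "cauchy Y"
  shows "cauchy Z"
  using assms unfolding gns_cauchy_def by (rule uniformly_small_dominated)

lemma eqv_dominated: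
  assumes "\<And>n. sn (Z n - Z' n) \<le> A * sn (X n - X' n) + B * sn (Y n - Y' n)"
    and "eqv X X'" "eqv Y Y'"
  shows "eqv Z Z'"
  using sn_nonneg assms unfolding gns_equiv_def by (rule tendsto_zero_dominated)

lemma cauchy_const: "cauchy (\<lambda>n. x)"
  by (simp add: gns_cauchy_def)

lemma cauchy_add: "cauchy X \<Longrightarrow> cauchy Y \<Longrightarrow> cauchy (\<lambda>n. X n + Y n)"
  by (rule cauchy_dominated[of 1 1 _ X Y]) (simp_all add: sn_add_diff_le)

lemma cauchy_scaleC: "cauchy X \<Longrightarrow> cauchy (\<lambda>n. scaleC c (X n))"
  by (rule cauchy_dominated[of "cmod c" 0 _ X X]) (simp_all add: sn_scaleC scaleC_diff_right[symmetric])

lemma cauchy_minus: "cauchy X \<Longrightarrow> cauchy (\<lambda>n. - X n)"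
  using cauchy_scaleC[of X "-1"] by simp

lemma cauchy_mult_left: "cauchy X \<Longrightarrow> cauchy (\<lambda>n. a * X n)"
  by (rule cauchy_dominated[of "sqrt (norm (cstar a) * norm a)" 0 _ X X])
    (simp_all add: right_diff_distrib[symmetric] sn_mult_le)

lemma eqv_refl: "eqv X X"
  by (simp add: gns_equiv_def)

lemma eqv_sym: "eqv X Y \<Longrightarrow> eqv Y X"
  unfolding gns_equiv_def using sn_minus_commute by simp

lemma eqv_trans: "eqv X Y \<Longrightarrow> eqv Y Z \<Longrightarrow> eqv X Z"
  by (rule eqv_dominated[of X Z 1 X Y 1 Y Z]) (simp_all add: sn_diff_triangle)

lemma cls_eqI: "eqv X Y \<Longrightarrow> cls X = cls Y"
  unfolding gns_cls_def using eqv_trans eqv_sym by blast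

lemma GNS_space_carrier: "u \<in> hcarrier H \<longleftrightarrow> (\<exists>X. cauchy X \<and> u = cls X)"
  by (auto simp: GNS_space_def)

lemma cls_in_GNS_space: "cauchy X \<Longrightarrow> cls X \<in> hcarrier H"
  using GNS_space_carrier by auto

lemma ball_GNS_space: "(\<And>X. cauchy X \<Longrightarrow> P (cls X)) \<Longrightarrow> \<forall>u\<in>hcarrier H. P u"
  using GNS_space_carrier by auto

lemma gns_repr_cls:
  assumes "cauchy X"
  shows "cauchy (gns_repr (cls X))" "eqv X (gns_repr (cls X))"
proof -
  have "X \<in> cls X"
    using assms by (simp add: gns_cls_def eqv_refl)
  then have "gns_repr (cls X) \<in> cls X"
    unfolding gns_repr_def by (rule someI[of "\<lambda>Y. Y \<in> cls X"])
  then show "cauchy (gns_repr (cls X))" "eqv X (gns_repr (cls X))"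
    by (simp_all add: gns_cls_def)
qed

lemma cls_gns_repr: "cauchy X \<Longrightarrow> cls (gns_repr (cls X)) = cls X"
  using gns_repr_cls cls_eqI eqv_sym by metis

text \<open>The operations of \<open>H\<^sub>\<omega>\<close> are defined through the representatives chosen by \<open>gns_repr\<close>;
  they can be computed on any representative.\<close>

lemma hzero_GNS_space: "hzero H = cls (\<lambda>n. 0)"
  by (simp add: GNS_space_def)

lemma hadd_cls:
  assumes "cauchy X" "cauchy Y"
  shows "hadd H (cls X) (cls Y) = cls (\<lambda>n. X n + Y n)"
proof -
  have "eqv (\<lambda>n. X n + Y n) (\<lambda>n. gns_repr (cls X) n + gns_repr (cls Y) n)"
    by (rule eqv_dominated[of _ _ 1 X "gns_repr (cls X)" 1 Y "gns_repr (cls Y)"])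
      (simp_all add: sn_add_diff_le gns_repr_cls assms)
  then show ?thesis
    by (simp add: GNS_space_def cls_eqI[symmetric])
qed

lemma hscale_cls:
  assumes "cauchy X"
  shows "hscale H c (cls X) = cls (\<lambda>n. scaleC c (X n))"
proof -
  have "eqv (\<lambda>n. scaleC c (X n)) (\<lambda>n. scaleC c (gns_repr (cls X) n))"
    by (rule eqv_dominated[of _ _ "cmod c" X "gns_repr (cls X)" 0 X X])
      (simp_all add: sn_scaleC scaleC_diff_right[symmetric] gns_repr_cls assms eqv_refl)
  then show ?thesis
    by (simp add: GNS_space_def cls_eqI[symmetric])
qed

lemma GNS_rep_cls:
  assumes "cauchy X"
  shows "GNS_rep \<omega> a (cls X) = cls (\<lambda>n. a * X n)"
proof -
  have "eqv (\<lambda>n. a * X n) (\<lambda>n. a * gns_repr (cls X) n)"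
    by (rule eqv_dominated[of _ _ "sqrt (norm (cstar a) * norm a)" X "gns_repr (cls X)" 0 X X])
      (simp_all add: right_diff_distrib[symmetric] sn_mult_le gns_repr_cls assms eqv_refl)
  then show ?thesis
    by (simp add: GNS_rep_def cls_eqI[symmetric])
qed

lemma cauchy_bounded:
  assumes "cauchy X"
  shows "\<exists>B\<ge>0. \<forall>n. sn (X n) \<le> B"
proof -
  obtain N where N: "\<forall>m\<ge>N. \<forall>n\<ge>N. sn (X m - X n) < 1"
    using assms unfolding gns_cauchy_def by (meson zero_less_one)
  define B where "B = (\<Sum>i\<le>N. sn (X i)) + 1"
  have initial: "sn (X i) \<le> (\<Sum>i\<le>N. sn (X i))" if "i \<le> N" for i
    using that by (intro member_le_sum) auto
  have "sn (X n) \<le> B" for n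
  proof (cases "n \<le> N")
    case False
    then have "sn (X n) \<le> sn (X n - X N) + sn (X N)" "sn (X n - X N) < 1"
      using sn_triangle[of "X n - X N" "X N"] N by simp_all
    then show ?thesis
      using initial[of N] by (simp add: B_def)
  qed (use initial[of n] in \<open>simp add: B_def\<close>)
  moreover have "0 \<le> B"
    unfolding B_def by (simp add: sum_nonneg)
  ultimately show ?thesis
    by blast
qed

lemma convergent_form:
  assumes X: "cauchy X" and Y: "cauchy Y"
  shows "convergent (\<lambda>n. form (X n) (Y n))"
proof -
  obtain B\<^sub>x B\<^sub>y where B: "\<forall>n. sn (X n) \<le> B\<^sub>x" "\<forall>n. sn (Y n) \<le> B\<^sub>y" "B\<^sub>x \<ge> 0" "B\<^sub>y \<ge> 0"
    using cauchy_bounded[OF X] cauchy_bounded[OF Y] by blast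
  have "Cauchy (\<lambda>n. form (X n) (Y n))"
    unfolding Cauchy_def dist_norm
  proof (rule uniformly_small_dominated[of B\<^sub>y B\<^sub>x])
    show "cmod (form (X m) (Y m) - form (X n) (Y n)) \<le> B\<^sub>y * sn (X m - X n) + B\<^sub>x * sn (Y m - Y n)"
      for m n
      using B by (intro cmod_form_diff_le) auto
  qed (use B X Y in \<open>simp_all add: gns_cauchy_def\<close>)
  then show ?thesis
    by (simp add: Cauchy_convergent_iff)
qed

lemma tendsto_form_diff_eqv:
  assumes "cauchy X'" "cauchy Y" "eqv X X'" "eqv Y Y'"
  shows "(\<lambda>n. form (X n) (Y n) - form (X' n) (Y' n)) \<longlonglongrightarrow> 0"
proof -
  obtain B\<^sub>x B\<^sub>y where B: "\<forall>n. sn (X' n) \<le> B\<^sub>x" "\<forall>n. sn (Y n) \<le> B\<^sub>y"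
    using cauchy_bounded[OF assms(1)] cauchy_bounded[OF assms(2)] by blast
  have "(\<lambda>n. cmod (form (X n) (Y n) - form (X' n) (Y' n))) \<longlonglongrightarrow> 0"
  proof (rule tendsto_zero_dominated[of _ B\<^sub>y _ B\<^sub>x])
    show "cmod (form (X n) (Y n) - form (X' n) (Y' n)) \<le> B\<^sub>y * sn (X n - X' n) + B\<^sub>x * sn (Y n - Y' n)"
      for n
      using B by (intro cmod_form_diff_le) auto
  qed (use assms(3,4) in \<open>simp_all add: gns_equiv_def\<close>)
  then show ?thesis
    by (simp add: tendsto_norm_zero_iff)
qed

lemma tendsto_hinner_cls:
  assumes "cauchy X" "cauchy Y"
  shows "(\<lambda>n. form (X n) (Y n)) \<longlonglongrightarrow> hinner H (cls X) (cls Y)"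
proof -
  let ?X' = "gns_repr (cls X)" and ?Y' = "gns_repr (cls Y)"
  have "(\<lambda>n. form (?X' n) (?Y' n)) \<longlonglongrightarrow> hinner H (cls X) (cls Y)"
    using convergent_form[of ?X' ?Y'] gns_repr_cls assms
    by (simp add: GNS_space_def form_def convergent_LIMSEQ_iff)
  moreover have "(\<lambda>n. form (X n) (Y n) - form (?X' n) (?Y' n)) \<longlonglongrightarrow> 0"
    using gns_repr_cls assms by (intro tendsto_form_diff_eqv) simp_all
  ultimately show ?thesis
    by (rule Lim_transform)
qed

lemma tendsto_hnorm_cls:
  assumes "cauchy X"
  shows "(\<lambda>n. sn (X n)) \<longlonglongrightarrow> hnorm H (cls X)"
  unfolding sn_def hnorm_def by (intro tendsto_real_sqrt tendsto_Re tendsto_hinner_cls assms)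

lemma tendsto_hdist_cls:
  assumes "cauchy X" "cauchy Y"
  shows "(\<lambda>n. sn (X n - Y n)) \<longlonglongrightarrow> hdist H (cls X) (cls Y)"
proof -
  have diff: "cauchy (\<lambda>n. X n - Y n)"
    using cauchy_add[OF assms(1) cauchy_minus[OF assms(2)]] by simp
  have "hdist H (cls X) (cls Y) = hnorm H (cls (\<lambda>n. X n - Y n))"
    unfolding hdist_def using assms cauchy_minus[of Y]
    by (simp add: hscale_cls hadd_cls)
  with tendsto_hnorm_cls[OF diff] show ?thesis
    by simp
qed

lemma hdist_cls_nonneg:
  assumes "cauchy X" "cauchy Y"
  shows "0 \<le> hdist H (cls X) (cls Y)"
  using tendsto_hdist_cls[OF assms] by (rule LIMSEQ_le_const) simp

lemma hdist_cls_commute: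
  assumes "cauchy X" "cauchy Y"
  shows "hdist H (cls X) (cls Y) = hdist H (cls Y) (cls X)"
proof -
  have "(\<lambda>n. sn (X n - Y n)) = (\<lambda>n. sn (Y n - X n))"
    using sn_minus_commute by simp
  then show ?thesis
    using tendsto_hdist_cls[OF assms] tendsto_hdist_cls[OF assms(2,1)] by (simp add: LIMSEQ_unique)
qed

lemma hdist_cls_triangle:
  "cauchy X \<Longrightarrow> cauchy Y \<Longrightarrow> cauchy Z \<Longrightarrow>
    hdist H (cls X) (cls Z) \<le> hdist H (cls X) (cls Y) + hdist H (cls Y) (cls Z)"
  by (rule LIMSEQ_le[OF tendsto_hdist_cls tendsto_add[OF tendsto_hdist_cls tendsto_hdist_cls]])
    (auto simp: sn_diff_triangle)

lemma hdist_cls_const: "hdist H (cls (\<lambda>n. a)) (cls (\<lambda>n. b)) = sn (a - b)"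
  using tendsto_hdist_cls[OF cauchy_const cauchy_const, of a b] by (simp add: LIMSEQ_const_iff)

lemma hdist_cls_const_le:
  assumes "cauchy X" "\<And>n. n \<ge> N \<Longrightarrow> sn (X n - z) \<le> r"
  shows "hdist H (cls X) (cls (\<lambda>n. z)) \<le> r"
  using assms by (intro Lim_bounded[OF tendsto_hdist_cls]) (auto simp: cauchy_const)

lemma hdist_triangle:
  assumes "u \<in> hcarrier H" "v \<in> hcarrier H" "w \<in> hcarrier H"
  shows "hdist H u w \<le> hdist H u v + hdist H v w"
  using assms hdist_cls_triangle unfolding GNS_space_carrier by blast

lemma exists_const_near:
  assumes "u \<in> hcarrier H" "e > 0"
  shows "\<exists>z. hdist H u (cls (\<lambda>n. z)) \<le> e \<and> hdist H (cls (\<lambda>n. z)) u \<le> e"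
proof -
  obtain X where X: "cauchy X" "u = cls X"
    using assms(1) GNS_space_carrier by blast
  then obtain N where "\<forall>m\<ge>N. \<forall>n\<ge>N. sn (X m - X n) < e"
    using assms(2) unfolding gns_cauchy_def by blast
  then have "hdist H (cls X) (cls (\<lambda>n. X N)) \<le> e"
    by (intro hdist_cls_const_le[OF X(1), of N]) (simp add: less_imp_le)
  then show ?thesis
    using X hdist_cls_commute[OF X(1) cauchy_const] by metis
qed

text \<open>A Cauchy sequence \<open>U\<close> in \<open>H\<^sub>\<omega>\<close> is approximated by constant classes \<open>[Z\<^sub>k]\<close>; the diagonal
  sequence \<open>Z\<close> is then Cauchy for the seminorm and its class is the limit of \<open>U\<close>.\<close>

lemma cauchy_diagonal:
  assumes U: "\<And>k. U k \<in> hcarrier H"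
    and C: "\<forall>e>0. \<exists>N. \<forall>m\<ge>N. \<forall>n\<ge>N. hdist H (U m) (U n) < e"
    and near: "\<And>k. hdist H (U k) (cls (\<lambda>n. Z k)) \<le> inverse (real (Suc k))"
      "\<And>k. hdist H (cls (\<lambda>n. Z k)) (U k) \<le> inverse (real (Suc k))"
  shows "cauchy Z"
  unfolding gns_cauchy_def
proof (intro allI impI)
  fix e :: real
  assume "e > 0"
  then obtain M\<^sub>1 where M\<^sub>1: "\<forall>m\<ge>M\<^sub>1. \<forall>n\<ge>M\<^sub>1. hdist H (U m) (U n) < e / 3"
    using C by (meson divide_pos_pos zero_less_numeral)
  obtain M\<^sub>2 where M\<^sub>2: "inverse (real (Suc M\<^sub>2)) < e / 3"
    using reals_Archimedean \<open>e > 0\<close> by (metis divide_pos_pos zero_less_numeral)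
  have "sn (Z j - Z k) < e" if "j \<ge> max M\<^sub>1 M\<^sub>2" "k \<ge> max M\<^sub>1 M\<^sub>2" for j k
  proof -
    have const: "cls (\<lambda>n. Z i) \<in> hcarrier H" for i
      by (rule cls_in_GNS_space[OF cauchy_const])
    have "sn (Z j - Z k) = hdist H (cls (\<lambda>n. Z j)) (cls (\<lambda>n. Z k))"
      by (simp add: hdist_cls_const)
    also have "\<dots> \<le> hdist H (cls (\<lambda>n. Z j)) (U j) + hdist H (U j) (cls (\<lambda>n. Z k))"
      by (rule hdist_triangle[OF const U const])
    also have "hdist H (U j) (cls (\<lambda>n. Z k)) \<le> hdist H (U j) (U k) + hdist H (U k) (cls (\<lambda>n. Z k))"
      by (rule hdist_triangle[OF U U const])
    finally have "sn (Z j - Z k)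
        \<le> inverse (real (Suc j)) + hdist H (U j) (U k) + inverse (real (Suc k))"
      using near[of k] near(2)[of j] by simp
    moreover have "inverse (real (Suc j)) \<le> inverse (real (Suc M\<^sub>2))"
      "inverse (real (Suc k)) \<le> inverse (real (Suc M\<^sub>2))"
      using that by (simp_all add: le_imp_inverse_le)
    moreover have "hdist H (U j) (U k) < e / 3"
      using M\<^sub>1 that by simp
    ultimately show ?thesis
      using M\<^sub>2 by linarith
  qed
  then show "\<exists>N. \<forall>m\<ge>N. \<forall>n\<ge>N. sn (Z m - Z n) < e"
    by blast
qed

lemma tendsto_hdist_diagonal:
  assumes U: "\<And>k. U k \<in> hcarrier H" and Z: "cauchy Z"
    and near: "\<And>k. hdist H (U k) (cls (\<lambda>n. Z k)) \<le> inverse (real (Suc k))"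
  shows "(\<lambda>k. hdist H (U k) (cls Z)) \<longlonglongrightarrow> 0"
proof -
  have const_to_Z: "(\<lambda>k. hdist H (cls (\<lambda>n. Z k)) (cls Z)) \<longlonglongrightarrow> 0"
  proof (rule metric_LIMSEQ_I)
    fix e :: real
    assume "e > 0"
    then obtain M where M: "\<forall>m\<ge>M. \<forall>n\<ge>M. sn (Z m - Z n) < e / 2"
      using Z unfolding gns_cauchy_def by (meson half_gt_zero)
    have "dist (hdist H (cls (\<lambda>n. Z k)) (cls Z)) 0 < e" if "k \<ge> M" for k
    proof -
      have "hdist H (cls Z) (cls (\<lambda>n. Z k)) \<le> e / 2"
        using M that by (intro hdist_cls_const_le[OF Z, of M]) (simp add: less_imp_le)
      then have "hdist H (cls (\<lambda>n. Z k)) (cls Z) \<le> e / 2"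
        using hdist_cls_commute[OF Z cauchy_const] by simp
      moreover have "0 \<le> hdist H (cls (\<lambda>n. Z k)) (cls Z)"
        by (rule hdist_cls_nonneg[OF cauchy_const Z])
      ultimately show ?thesis
        using \<open>e > 0\<close> by simp
    qed
    then show "\<exists>M. \<forall>k\<ge>M. dist (hdist H (cls (\<lambda>n. Z k)) (cls Z)) 0 < e"
      by blast
  qed
  have "0 \<le> hdist H (U k) (cls Z)" for k
    using U[of k] hdist_cls_nonneg[OF _ Z] unfolding GNS_space_carrier by auto
  moreover have "hdist H (U k) (cls Z)
      \<le> 1 * inverse (real (Suc k)) + 1 * hdist H (cls (\<lambda>n. Z k)) (cls Z)" for k
    using hdist_triangle[OF U[of k] cls_in_GNS_space[OF cauchy_const[of "Z k"]] cls_in_GNS_space[OF Z]] near[of k]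
    by simp
  ultimately show ?thesis
    using LIMSEQ_inverse_real_of_nat const_to_Z by (rule tendsto_zero_dominated)
qed

lemma GNS_space_complete:
  assumes U: "\<forall>k. U k \<in> hcarrier H"
    and C: "\<forall>e>0. \<exists>N. \<forall>m\<ge>N. \<forall>n\<ge>N. hdist H (U m) (U n) < e"
  shows "\<exists>u\<in>hcarrier H. (\<lambda>k. hdist H (U k) u) \<longlonglongrightarrow> 0"
proof -
  have "\<forall>k. \<exists>z. hdist H (U k) (cls (\<lambda>n. z)) \<le> inverse (real (Suc k))
      \<and> hdist H (cls (\<lambda>n. z)) (U k) \<le> inverse (real (Suc k))"
    using U exists_const_near by simp
  then obtain Z where near:
    "\<And>k. hdist H (U k) (cls (\<lambda>n. Z k)) \<le> inverse (real (Suc k))"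
    "\<And>k. hdist H (cls (\<lambda>n. Z k)) (U k) \<le> inverse (real (Suc k))"
    by metis
  have "cauchy Z"
    using U C near by (intro cauchy_diagonal) auto
  then show ?thesis
    using U near tendsto_hdist_diagonal cls_in_GNS_space by blast
qed

lemma hinner_cls_add_right:
  "cauchy X \<Longrightarrow> cauchy Y \<Longrightarrow> cauchy Z \<Longrightarrow>
    hinner H (cls X) (cls (\<lambda>n. Y n + Z n)) = hinner H (cls X) (cls Y) + hinner H (cls X) (cls Z)"
  using tendsto_hinner_cls[of X "\<lambda>n. Y n + Z n"] cauchy_add[of Y Z]
    tendsto_add[OF tendsto_hinner_cls[of X Y] tendsto_hinner_cls[of X Z]]
  by (simp add: LIMSEQ_unique)

lemma hinner_cls_scaleC_right:
  "cauchy X \<Longrightarrow> cauchy Y \<Longrightarrow> hinner H (cls X) (cls (\<lambda>n. scaleC c (Y n))) = c * hinner H (cls X) (cls Y)"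
  using tendsto_hinner_cls[of X "\<lambda>n. scaleC c (Y n)"] cauchy_scaleC[of Y c]
    tendsto_mult_left[OF tendsto_hinner_cls[of X Y], of c]
  by (simp add: LIMSEQ_unique)

lemma hinner_cls_commute: "cauchy X \<Longrightarrow> cauchy Y \<Longrightarrow> hinner H (cls Y) (cls X) = cnj (hinner H (cls X) (cls Y))"
  using tendsto_hinner_cls[of Y X] tendsto_cnj[OF tendsto_hinner_cls[of X Y]]
  by (simp add: form_cnj[of "X n" "Y n" for n] LIMSEQ_unique)

lemma hinner_cls_self_nonneg: "cauchy X \<Longrightarrow> 0 \<le> Re (hinner H (cls X) (cls X))"
  by (rule LIMSEQ_le_const[OF tendsto_Re[OF tendsto_hinner_cls]]) (auto simp: form_self_nonneg)

lemma hinner_cls_self_eq_zero: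
  assumes "cauchy X" "hinner H (cls X) (cls X) = 0"
  shows "cls X = cls (\<lambda>n. 0)"
proof (rule cls_eqI)
  show "eqv X (\<lambda>n. 0)"
    using tendsto_hnorm_cls[OF assms(1)] assms(2) by (simp add: gns_equiv_def hnorm_def)
qed

lemma hilbert_space_GNS_space: "hilbert_space H"
  unfolding hilbert_space_def Let_def
proof (intro conjI)
  show "hzero H \<in> hcarrier H"
    by (simp add: hzero_GNS_space cls_in_GNS_space cauchy_const)
  show "\<forall>x\<in>hcarrier H. \<forall>y\<in>hcarrier H. hadd H x y \<in> hcarrier H"
    by (intro ball_GNS_space) (simp add: hadd_cls cls_in_GNS_space cauchy_add)
  show "\<forall>c. \<forall>x\<in>hcarrier H. hscale H c x \<in> hcarrier H"
    by (intro allI ball_GNS_space) (simp add: hscale_cls cls_in_GNS_space cauchy_scaleC)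
  show "\<forall>x\<in>hcarrier H. \<forall>y\<in>hcarrier H. \<forall>z\<in>hcarrier H. hadd H (hadd H x y) z = hadd H x (hadd H y z)"
    by (intro ball_GNS_space) (simp add: hadd_cls cauchy_add add.assoc)
  show "\<forall>x\<in>hcarrier H. \<forall>y\<in>hcarrier H. hadd H x y = hadd H y x"
    by (intro ball_GNS_space) (simp add: hadd_cls add.commute)
  show "\<forall>x\<in>hcarrier H. hadd H x (hzero H) = x"
    by (intro ball_GNS_space) (simp add: hzero_GNS_space hadd_cls cauchy_const)
  show "\<forall>x\<in>hcarrier H. hadd H x (hscale H (- 1) x) = hzero H"
    by (intro ball_GNS_space) (simp add: hzero_GNS_space hadd_cls hscale_cls cauchy_minus)
  show "\<forall>x\<in>hcarrier H. hscale H 1 x = x"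
    by (intro ball_GNS_space) (simp add: hscale_cls scaleC_one)
  show "\<forall>a b. \<forall>x\<in>hcarrier H. hscale H a (hscale H b x) = hscale H (a * b) x"
    by (intro allI ball_GNS_space) (simp add: hscale_cls cauchy_scaleC scaleC_scaleC)
  show "\<forall>a b. \<forall>x\<in>hcarrier H. hscale H (a + b) x = hadd H (hscale H a x) (hscale H b x)"
    by (intro allI ball_GNS_space) (simp add: hscale_cls hadd_cls cauchy_scaleC scaleC_add_left)
  show "\<forall>a. \<forall>x\<in>hcarrier H. \<forall>y\<in>hcarrier H.
      hscale H a (hadd H x y) = hadd H (hscale H a x) (hscale H a y)"
    by (intro allI ball_GNS_space) (simp add: hscale_cls hadd_cls cauchy_scaleC cauchy_add scaleC_add_right)
  show "\<forall>x\<in>hcarrier H. \<forall>y\<in>hcarrier H. \<forall>z\<in>hcarrier H.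
      hinner H x (hadd H y z) = hinner H x y + hinner H x z"
    by (intro ball_GNS_space) (simp add: hadd_cls hinner_cls_add_right)
  show "\<forall>c. \<forall>x\<in>hcarrier H. \<forall>y\<in>hcarrier H. hinner H x (hscale H c y) = c * hinner H x y"
    by (intro allI ball_GNS_space) (simp add: hscale_cls hinner_cls_scaleC_right)
  show "\<forall>x\<in>hcarrier H. \<forall>y\<in>hcarrier H. hinner H y x = cnj (hinner H x y)"
    by (intro ball_GNS_space) (blast intro: hinner_cls_commute)
  show "\<forall>x\<in>hcarrier H. 0 \<le> Re (hinner H x x)"
    by (intro ball_GNS_space) (simp add: hinner_cls_self_nonneg)
  show "\<forall>x\<in>hcarrier H. hinner H x x = 0 \<longrightarrow> x = hzero H"
    unfolding hzero_GNS_space by (intro ball_GNS_space impI hinner_cls_self_eq_zero)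
  show "\<forall>U. (\<forall>n. U n \<in> hcarrier H) \<and> (\<forall>e>0. \<exists>N. \<forall>m\<ge>N. \<forall>n\<ge>N. hdist H (U m) (U n) < e) \<longrightarrow>
      (\<exists>u\<in>hcarrier H. (\<lambda>n. hdist H (U n) u) \<longlonglongrightarrow> 0)"
    by (auto intro: GNS_space_complete)
qed

section \<open>The GNS representation\<close>

lemma bounded_linear_op_GNS_rep: "bounded_linear_op H H (GNS_rep \<omega> a)"
  unfolding bounded_linear_op_def
proof (intro conjI)
  show "\<forall>x\<in>hcarrier H. GNS_rep \<omega> a x \<in> hcarrier H"
    by (intro ball_GNS_space) (simp add: GNS_rep_cls cls_in_GNS_space cauchy_mult_left)
  show "\<forall>x\<in>hcarrier H. \<forall>y\<in>hcarrier H.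
      GNS_rep \<omega> a (hadd H x y) = hadd H (GNS_rep \<omega> a x) (GNS_rep \<omega> a y)"
    by (intro ball_GNS_space) (simp add: GNS_rep_cls hadd_cls cauchy_mult_left cauchy_add distrib_left)
  show "\<forall>c. \<forall>x\<in>hcarrier H. GNS_rep \<omega> a (hscale H c x) = hscale H c (GNS_rep \<omega> a x)"
    by (intro allI ball_GNS_space)
      (simp add: GNS_rep_cls hscale_cls cauchy_mult_left cauchy_scaleC mult_scaleC_right)
  show "\<exists>K. \<forall>x\<in>hcarrier H. hnorm H (GNS_rep \<omega> a x) \<le> K * hnorm H x"
  proof (intro exI ball_GNS_space)
    fix X
    assume X: "cauchy X"
    show "hnorm H (GNS_rep \<omega> a (cls X)) \<le> sqrt (norm (cstar a) * norm a) * hnorm H (cls X)"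
      unfolding GNS_rep_cls[OF X]
      by (rule LIMSEQ_le[OF tendsto_hnorm_cls[OF cauchy_mult_left[OF X]]
            tendsto_mult_left[OF tendsto_hnorm_cls[OF X]]])
        (simp add: sn_mult_le)
  qed
qed

lemma rep_obj_GNS: "rep_obj (GNS \<omega>)"
  unfolding rep_obj_def GNS_def prod.case
proof (intro conjI)
  show "hilbert_space H"
    by (rule hilbert_space_GNS_space)
  show "\<forall>a. bounded_linear_op H H (GNS_rep \<omega> a)"
    using bounded_linear_op_GNS_rep by blast
  show "\<forall>x\<in>hcarrier H. GNS_rep \<omega> 1 x = x"
    by (intro ball_GNS_space) (simp add: GNS_rep_cls)
  show "\<forall>a b. \<forall>x\<in>hcarrier H. GNS_rep \<omega> (a + b) x = hadd H (GNS_rep \<omega> a x) (GNS_rep \<omega> b x)"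
    by (intro allI ball_GNS_space) (simp add: GNS_rep_cls hadd_cls cauchy_mult_left distrib_right)
  show "\<forall>c a. \<forall>x\<in>hcarrier H. GNS_rep \<omega> (scaleC c a) x = hscale H c (GNS_rep \<omega> a x)"
    by (intro allI ball_GNS_space) (simp add: GNS_rep_cls hscale_cls cauchy_mult_left mult_scaleC_left)
  show "\<forall>a b. \<forall>x\<in>hcarrier H. GNS_rep \<omega> (a * b) x = GNS_rep \<omega> a (GNS_rep \<omega> b x)"
    by (intro allI ball_GNS_space) (simp add: GNS_rep_cls cauchy_mult_left mult.assoc)
  show "\<forall>a. \<forall>x\<in>hcarrier H. \<forall>y\<in>hcarrier H.
      hinner H (GNS_rep \<omega> (cstar a) x) y = hinner H x (GNS_rep \<omega> a y)"
  proof (intro allI ball_GNS_space)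
    fix a X Y
    assume "cauchy X" "cauchy Y"
    then show "hinner H (GNS_rep \<omega> (cstar a) (cls X)) (cls Y) = hinner H (cls X) (GNS_rep \<omega> a (cls Y))"
      using tendsto_hinner_cls[of "\<lambda>n. cstar a * X n" Y] tendsto_hinner_cls[of X "\<lambda>n. a * Y n"]
      by (simp add: GNS_rep_cls cauchy_mult_left form_def cstar_mult cstar_cstar mult.assoc LIMSEQ_unique)
  qed
qed

end

section \<open>Morphisms\<close>

lemma is_state_comp:
  assumes \<omega>: "is_state \<omega>" and f: "cstar_hom f"
  shows "is_state (\<omega> \<circ> f)"
proof -
  interpret state \<omega>
    using \<omega> by unfold_locales
  obtain K where K: "K \<ge> 0" "\<forall>x. cmod (\<omega> x) \<le> K * norm x"
    using bounded by blast
  obtain K\<^sub>f where K\<^sub>f: "\<forall>x. norm (f x) \<le> K\<^sub>f * norm x"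
    using cstar_hom_bounded[OF f] by blast
  have "cmod (\<omega> (f x)) \<le> (K * K\<^sub>f) * norm x" for x
    using K(2)[rule_format, of "f x"] mult_left_mono[OF K\<^sub>f[rule_format, of x] K(1)]
    by (simp add: mult.assoc)
  moreover have "f (cstar a * a) = cstar (f a) * f a" for a
    using f by (simp add: cstar_hom_mult cstar_hom_cstar)
  ultimately show ?thesis
    using f positive by (auto simp: is_state_def cstar_hom_add cstar_hom_scaleC cstar_hom_one)
qed

lemma gns_sn_comp: "cstar_hom f \<Longrightarrow> gns_sn (\<omega> \<circ> f) x = gns_sn \<omega> (f x)"
  by (simp add: gns_sn_def cstar_hom_mult cstar_hom_cstar)

lemma gns_cauchy_comp: "cstar_hom f \<Longrightarrow> gns_cauchy (\<omega> \<circ> f) X \<Longrightarrow> gns_cauchy \<omega> (\<lambda>n. f (X n))"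
  by (simp add: gns_cauchy_def gns_sn_comp cstar_hom_diff)

lemma gns_equiv_comp:
  "cstar_hom f \<Longrightarrow> gns_equiv (\<omega> \<circ> f) X Y \<Longrightarrow> gns_equiv \<omega> (\<lambda>n. f (X n)) (\<lambda>n. f (Y n))"
  by (simp add: gns_equiv_def gns_sn_comp cstar_hom_diff)

lemma GNS_mor_cls:
  assumes \<omega>: "is_state \<omega>" and f: "cstar_hom f" and X: "gns_cauchy (\<omega> \<circ> f) X"
  shows "GNS_mor f \<omega> (gns_cls (\<omega> \<circ> f) X) = gns_cls \<omega> (\<lambda>n. f (X n))"
proof -
  interpret A: state \<omega>
    using \<omega> by unfold_locales
  interpret A': state "\<omega> \<circ> f"
    using is_state_comp[OF \<omega> f] by unfold_locales
  have "gns_equiv \<omega> (\<lambda>n. f (X n)) (\<lambda>n. f (gns_repr (gns_cls (\<omega> \<circ> f) X) n))"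
    using A'.gns_repr_cls(2)[OF X] by (rule gns_equiv_comp[OF f])
  then show ?thesis
    unfolding GNS_mor_def by (rule A.cls_eqI[symmetric])
qed

lemma intertwiner_GNS_mor:
  assumes \<omega>: "is_state \<omega>" and f: "cstar_hom f"
  shows "intertwiner (GNS (\<omega> \<circ> f)) (Rep_map f (GNS \<omega>)) (GNS_mor f \<omega>)"
proof -
  interpret A: state \<omega>
    using \<omega> by unfold_locales
  interpret A': state "\<omega> \<circ> f"
    using is_state_comp[OF \<omega> f] by unfold_locales
  note GNS_mor_cls = GNS_mor_cls[OF \<omega> f] and cauchy_comp = gns_cauchy_comp[OF f]
  show ?thesis
    unfolding intertwiner_def GNS_def Rep_map_def prod.case bounded_linear_op_def
  proof (intro conjI)
    show "\<forall>x\<in>hcarrier A'.H. GNS_mor f \<omega> x \<in> hcarrier A.H"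
      by (intro A'.ball_GNS_space) (simp add: GNS_mor_cls A.cls_in_GNS_space cauchy_comp)
    show "\<forall>x\<in>hcarrier A'.H. \<forall>y\<in>hcarrier A'.H. GNS_mor f \<omega> (hadd A'.H x y) = hadd A.H (GNS_mor f \<omega> x) (GNS_mor f \<omega> y)"
      by (intro A'.ball_GNS_space)
        (simp add: GNS_mor_cls A'.hadd_cls A.hadd_cls A'.cauchy_add cauchy_comp cstar_hom_add[OF f])
    show "\<forall>c. \<forall>x\<in>hcarrier A'.H. GNS_mor f \<omega> (hscale A'.H c x) = hscale A.H c (GNS_mor f \<omega> x)"
      by (intro allI A'.ball_GNS_space)
        (simp add: GNS_mor_cls A'.hscale_cls A.hscale_cls A'.cauchy_scaleC cauchy_comp cstar_hom_scaleC[OF f])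
    show "\<exists>K. \<forall>x\<in>hcarrier A'.H. hnorm A.H (GNS_mor f \<omega> x) \<le> K * hnorm A'.H x"
    proof (intro exI[of _ 1] A'.ball_GNS_space)
      fix X
      assume X: "A'.cauchy X"
      show "hnorm A.H (GNS_mor f \<omega> (A'.cls X)) \<le> 1 * hnorm A'.H (A'.cls X)"
        using LIMSEQ_unique[OF A.tendsto_hnorm_cls[OF cauchy_comp[OF X]]
            A'.tendsto_hnorm_cls[OF X, unfolded gns_sn_comp[OF f]]]
        by (simp add: GNS_mor_cls[OF X])
    qed
    show "\<forall>a. \<forall>x\<in>hcarrier A'.H. GNS_mor f \<omega> (GNS_rep (\<omega> \<circ> f) a x) = GNS_rep \<omega> (f a) (GNS_mor f \<omega> x)"
      by (intro allI A'.ball_GNS_space)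
        (simp add: GNS_mor_cls A'.GNS_rep_cls A.GNS_rep_cls A'.cauchy_mult_left cauchy_comp cstar_hom_mult[OF f])
  qed
qed

lemma GNS_mor_id:
  assumes "is_state \<omega>"
  shows "\<forall>x\<in>hcarrier (GNS_space \<omega>). GNS_mor id \<omega> x = x"
proof -
  interpret state \<omega>
    using assms by unfold_locales
  show ?thesis
    by (intro ball_GNS_space) (simp add: GNS_mor_def cls_gns_repr)
qed

lemma GNS_mor_comp:
  assumes \<omega>: "is_state \<omega>" and f: "cstar_hom f" and g: "cstar_hom g"
  shows "\<forall>x\<in>hcarrier (GNS_space (\<omega> \<circ> f \<circ> g)). GNS_mor (f \<circ> g) \<omega> x = GNS_mor f \<omega> (GNS_mor g (\<omega> \<circ> f) x)"
proof -
  have \<omega>f: "is_state (\<omega> \<circ> f)"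
    by (rule is_state_comp[OF \<omega> f])
  interpret state "\<omega> \<circ> f \<circ> g"
    using is_state_comp[OF \<omega>f g] by unfold_locales
  show ?thesis
  proof (intro ball_GNS_space)
    fix X
    assume X: "cauchy X"
    have "GNS_mor (f \<circ> g) \<omega> (cls X) = gns_cls \<omega> (\<lambda>n. f (g (X n)))"
      using GNS_mor_cls[OF \<omega> cstar_hom_comp[OF f g], of X] X by (simp add: comp_assoc)
    moreover have "GNS_mor g (\<omega> \<circ> f) (cls X) = gns_cls (\<omega> \<circ> f) (\<lambda>n. g (X n))"
      by (rule GNS_mor_cls[OF \<omega>f g X])
    moreover have "GNS_mor f \<omega> (gns_cls (\<omega> \<circ> f) (\<lambda>n. g (X n))) = gns_cls \<omega> (\<lambda>n. f (g (X n)))"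
      by (rule GNS_mor_cls[OF \<omega> f gns_cauchy_comp[OF g X]])
    ultimately show "GNS_mor (f \<circ> g) \<omega> (cls X) = GNS_mor f \<omega> (GNS_mor g (\<omega> \<circ> f) (cls X))"
      by simp
  qed
qed

theorem theorem3p5:
  shows
  "(\<forall>\<omega>::'a::cstar_algebra \<Rightarrow> complex. is_state \<omega> \<longrightarrow> rep_obj (GNS \<omega>)) \<and>
   (\<forall>(f::'b::cstar_algebra \<Rightarrow> 'a) \<omega>. cstar_hom f \<and> is_state \<omega> \<longrightarrow>
       is_state (\<omega> \<circ> f) \<and>
       intertwiner (GNS (\<omega> \<circ> f)) (Rep_map f (GNS \<omega>)) (GNS_mor f \<omega>)) \<and>
   (\<forall>\<omega>::'a \<Rightarrow> complex. is_state \<omega> \<longrightarrow>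
       (\<forall>x\<in>hcarrier (GNS_space \<omega>). GNS_mor (id::'a \<Rightarrow> 'a) \<omega> x = x)) \<and>
   (\<forall>(f::'b \<Rightarrow> 'a) (g::'c::cstar_algebra \<Rightarrow> 'b) \<omega>.
       cstar_hom f \<and> cstar_hom g \<and> is_state \<omega> \<longrightarrow>
       (\<forall>x\<in>hcarrier (GNS_space (\<omega> \<circ> f \<circ> g)).
           GNS_mor (f \<circ> g) \<omega> x = GNS_mor f \<omega> (GNS_mor g (\<omega> \<circ> f) x)))"
proof (intro conjI allI impI)
  show "rep_obj (GNS \<omega>)" if "is_state \<omega>" for \<omega> :: "'a \<Rightarrow> complex"
    using that by (rule state.rep_obj_GNS[unfolded state_def])
qed (simp_all add: is_state_comp intertwiner_GNS_mor GNS_mor_id GNS_mor_comp)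

end
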